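(* Let $\mathbb{F}$ be a field. (i) Let $P(\lambda)=L(\lambda)R(\lambda)$ with $L\in\mathbb{F}[\lambda]^{m\times r}$ and $R\in\mathbb{F}[\lambda]^{r\times n}$. If $L$ is column reduced or $R$ is row reduced, then $\deg(P)=\max_{1\le i\le r}\{\deg(L_{*i})+\deg(R_{i*})\}$. (ii) Let $P(\lambda)=L(\lambda)E(\lambda)R(\lambda)$ with $L\in\mathbb{F}[\lambda]^{m\times r}$, $E=(e_{ij})\in\mathbb{F}[\lambda]^{r\times s}$, $R\in\mathbb{F}[\lambda]^{s\times n}$. If $L$ is column reduced and $R$ is row reduced, then $\deg(P)=\max_{1\le i\le r,\,1\le j\le s}\{\deg(L_{*i})+\deg(e_{ij})+\deg(R_{j*})\}$.
   Context: Degree of a polynomial vector/matrix: maximum degree of its entries, $\deg0=-\infty$. $L_{*i}$: $i$th column, $R_{i*}$: $i$th row. For $N\in\mathbb{F}[\lambda]^{m\times n}$ with column degrees $d'_1,\dots,d'_n$, the highest-column-degree coefficient matrix $N_{hc}$ is the constant matrix whose $j$th column is the coefficient of $\lambda^{d'_j}$ in the $j$th column of $N$; $N$ is column reduced if $N_{hc}$ has full column rank. Analogously, with row degrees $d_i$, $M_{hr}$ has as $i$th row the coefficient of $\lambda^{d_i}$ in the $i$th row of $M$, and $M$ is row reduced if $M_{hr}$ has full row rank. *)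

theory Defs
  imports "Jordan_Normal_Form.DL_Rank" "HOL-Computational_Algebra.Polynomial" "HOL-Library.Extended_Real"
begin

definition pdeg :: "'a::zero poly \<Rightarrow> ereal" where
  "pdeg p = (if p = 0 then -\<infinity> else ereal (real (degree p)))"

definition vdeg :: "'a::zero poly vec \<Rightarrow> ereal" where
  "vdeg v = Max (insert (-\<infinity>) {pdeg (v $ i) | i. i < dim_vec v})"

definition mdeg :: "'a::zero poly mat \<Rightarrow> ereal" where
  "mdeg A = Max (insert (-\<infinity>) {pdeg (A $$ (i, j)) | i j. i < dim_row A \<and> j < dim_col A})"

text \<open>Highest-column-degree coefficient matrix: the j-th column is the coefficient of
  lambda^(d'_j) in the j-th column, d'_j the degree of the j-th column
  (a zero column gives a zero column).\<close>
definition hc_mat :: "'a::zero poly mat \<Rightarrow> 'a mat" where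
  "hc_mat N = mat (dim_row N) (dim_col N) (\<lambda>(i, j).
     if vdeg (col N j) = -\<infinity> then 0
     else coeff (N $$ (i, j)) (nat \<lfloor>real_of_ereal (vdeg (col N j))\<rfloor>))"

definition hr_mat :: "'a::zero poly mat \<Rightarrow> 'a mat" where
  "hr_mat M = mat (dim_row M) (dim_col M) (\<lambda>(i, j).
     if vdeg (row M i) = -\<infinity> then 0
     else coeff (M $$ (i, j)) (nat \<lfloor>real_of_ereal (vdeg (row M i))\<rfloor>))"

definition column_reduced :: "'a::field poly mat \<Rightarrow> bool" where
  "column_reduced N \<longleftrightarrow> vec_space.rank (dim_row N) (hc_mat N) = dim_col N"

definition row_reduced :: "'a::field poly mat \<Rightarrow> bool" where
  "row_reduced M \<longleftrightarrow> vec_space.rank (dim_col M) (transpose_mat (hr_mat M)) = dim_row M"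

end

theory Submission
  imports Defs
begin

text \<open>
  Predictable degree property: if N is column reduced with column degrees d'_i, then
  deg (N v) = max_i (d'_i + deg v_i). For \<ge>, let D be that maximum:
  the coefficient of \<lambda>^D in N v is N_hc c, where c_i is the coefficient of \<lambda>^(D - d'_i) in v_i.
  An index attaining the maximum contributes the leading coefficient of its v_i, so c \<noteq> 0 and
  hence N_hc c \<noteq> 0 by full column rank. Applied to the columns of R this gives (i) for column
  reduced L, transposition gives the row reduced case, and (ii) follows by applying (i) to L (E R)
  and the row reduced case to each row E_i* R.
\<close>

lemma Max_insert_MInf_eq_Sup: "finite S \<Longrightarrow> Max (insert (-\<infinity>) S) = Sup (S :: ereal set)"
  by (simp add: Max_Sup)

lemma SUP_cartesian_product:
  "(SUP (i, j)\<in>A \<times> B. f i j) = (SUP i\<in>A. SUP j\<in>B. f i j :: 'a::complete_lattice)"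
  by (rule antisym) (auto intro!: SUP_least SUP_upper2)

lemma finite_SUP_in_image:
  assumes "finite A" "A \<noteq> {}"
  shows "(SUP i\<in>A. f i :: 'a::complete_linorder) \<in> f ` A"
  using Max_in[of "f ` A"] Max_Sup[of "f ` A"] assms by simp

lemma SUP_ereal_add_right_finite:
  fixes c :: ereal
  assumes "finite I" "c \<noteq> \<infinity>" "\<And>i. i \<in> I \<Longrightarrow> f i \<noteq> \<infinity>"
  shows "(SUP i\<in>I. c + f i) = c + (SUP i\<in>I. f i)"
proof -
  consider "I = {}" | "c = -\<infinity>" | "I \<noteq> {}" "c \<noteq> -\<infinity>" by blast
  then show ?thesis
  proof cases
    case 1
    then show ?thesis using assms(2) by (cases c) (simp_all add: bot_ereal_def)
  next
    case 2
    have "c + f i = -\<infinity>" if "i \<in> I" for i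
      using 2 assms(3)[OF that] by (cases "f i") simp_all
    then have "(SUP i\<in>I. c + f i) = -\<infinity>"
      unfolding bot_ereal_def[symmetric] by simp
    moreover have "c + (SUP i\<in>I. f i) = -\<infinity>"
    proof (cases "I = {}")
      case False
      then have "(SUP i\<in>I. f i) \<noteq> \<infinity>"
        using finite_SUP_in_image[OF assms(1) False, of f] assms(3) by force
      then show ?thesis using 2 by (cases "SUP i\<in>I. f i") simp_all
    qed (simp add: 2 bot_ereal_def)
    ultimately show ?thesis by simp
  next
    case 3
    then show ?thesis by (simp add: SUP_ereal_add_right)
  qed
qed

lemma pdeg_ne_PInf [simp]: "pdeg p \<noteq> \<infinity>"
  by (simp add: pdeg_def)

lemma pdeg_eq_MInf_iff [simp]: "pdeg p = -\<infinity> \<longleftrightarrow> p = 0"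
  by (simp add: pdeg_def)

lemma pdeg_mult: "pdeg (p * q :: 'a::idom poly) = pdeg p + pdeg q"
  by (simp add: pdeg_def degree_mult_eq)

lemma pdeg_add_le: "pdeg (p + q) \<le> max (pdeg p) (pdeg q)"
  using degree_add_le_max[of p q]
  by (cases "p = 0"; cases "q = 0"; cases "p + q = 0") (auto simp: pdeg_def max_def)

lemma pdeg_sum_le_SUP: "pdeg (sum f A) \<le> (SUP i\<in>A. pdeg (f i))"
proof (induction A rule: infinite_finite_induct)
  case (insert a A)
  have "pdeg (f a + sum f A) \<le> max (pdeg (f a)) (SUP i\<in>A. pdeg (f i))"
    by (rule order.trans[OF pdeg_add_le max.mono[OF order.refl insert.IH]])
  then show ?case using insert by simp
qed (simp_all add: pdeg_def)

lemma le_pdeg_if_coeff_nonzero: "coeff p n \<noteq> 0 \<Longrightarrow> ereal (real n) \<le> pdeg p"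
  by (cases "p = 0") (auto simp: pdeg_def le_degree)

lemma degree_le_if_pdeg_le: "pdeg p \<le> ereal (real n) \<Longrightarrow> degree p \<le> n"
  by (cases "p = 0") (auto simp: pdeg_def)

lemma coeff_mult_at_degree_bounds:
  assumes "degree p \<le> a" "degree q \<le> b"
  shows "coeff (p * q) (a + b) = coeff p a * coeff q b"
proof (cases "degree p = a \<and> degree q = b")
  case True
  then show ?thesis using coeff_mult_degree_sum[of p q] by simp
next
  case False
  then have "degree (p * q) < a + b" "coeff p a = 0 \<or> coeff q b = 0"
    using assms degree_mult_le[of p q] by (auto intro!: coeff_eq_0)
  then show ?thesis by (auto intro!: coeff_eq_0)
qed

lemma vdeg_eq_SUP: "vdeg v = (SUP i\<in>{..<dim_vec v}. pdeg (v $ i))"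
proof -
  have "{pdeg (v $ i) | i. i < dim_vec v} = (\<lambda>i. pdeg (v $ i)) ` {..<dim_vec v}"
    by auto
  then show ?thesis
    unfolding vdeg_def by (simp add: Max_insert_MInf_eq_Sup)
qed

lemma vdeg_upper: "i < dim_vec v \<Longrightarrow> pdeg (v $ i) \<le> vdeg v"
  unfolding vdeg_eq_SUP by (rule SUP_upper) simp

lemma vdeg_eq_MInf_or_attained: "vdeg v = -\<infinity> \<or> (\<exists>i<dim_vec v. vdeg v = pdeg (v $ i))"
proof (cases "{..<dim_vec v} = {}")
  case False
  have "vdeg v \<in> (\<lambda>i. pdeg (v $ i)) ` {..<dim_vec v}"
    unfolding vdeg_eq_SUP using False by (intro finite_SUP_in_image) auto
  then show ?thesis by auto
next
  case True
  then show ?thesis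
    unfolding vdeg_eq_SUP by (simp add: bot_ereal_def)
qed

lemma vdeg_ne_PInf [simp]: "vdeg v \<noteq> \<infinity>"
  using vdeg_eq_MInf_or_attained[of v] by auto

definition vdegree :: "'a::zero poly vec \<Rightarrow> nat" where
  "vdegree v = nat \<lfloor>real_of_ereal (vdeg v)\<rfloor>"

lemma vdeg_eq_vdegree: "vdeg v \<noteq> -\<infinity> \<Longrightarrow> vdeg v = ereal (real (vdegree v))"
  using vdeg_eq_MInf_or_attained[of v] by (auto simp: vdegree_def pdeg_def split: if_splits)

lemma mdeg_eq_SUP: "mdeg A = (SUP i\<in>{..<dim_row A}. SUP j\<in>{..<dim_col A}. pdeg (A $$ (i, j)))"
proof -
  have "{pdeg (A $$ (i, j)) | i j. i < dim_row A \<and> j < dim_col A}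
      = (\<lambda>(i, j). pdeg (A $$ (i, j))) ` ({..<dim_row A} \<times> {..<dim_col A})"
    by auto
  then have "mdeg A = (SUP (i, j)\<in>{..<dim_row A} \<times> {..<dim_col A}. pdeg (A $$ (i, j)))"
    unfolding mdeg_def by (simp add: Max_insert_MInf_eq_Sup)
  also have "\<dots> = (SUP i\<in>{..<dim_row A}. SUP j\<in>{..<dim_col A}. pdeg (A $$ (i, j)))"
    by (rule SUP_cartesian_product)
  finally show ?thesis .
qed

lemma mdeg_eq_SUP_col: "mdeg A = (SUP j\<in>{..<dim_col A}. vdeg (col A j))"
  unfolding mdeg_eq_SUP by (subst SUP_commute) (simp add: vdeg_eq_SUP)

lemma mdeg_transpose: "mdeg (transpose_mat A) = mdeg A"
  unfolding mdeg_eq_SUP by (subst SUP_commute) simp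

lemma hc_mat_carrier: "hc_mat N \<in> carrier_mat (dim_row N) (dim_col N)"
  by (simp add: hc_mat_def)

lemma hc_mat_index:
  "i < dim_row N \<Longrightarrow> j < dim_col N \<Longrightarrow>
    hc_mat N $$ (i, j) = (if vdeg (col N j) = -\<infinity> then 0 else coeff (N $$ (i, j)) (vdegree (col N j)))"
  by (simp add: hc_mat_def vdegree_def)

lemma column_reduced_transpose: "column_reduced (transpose_mat M) \<longleftrightarrow> row_reduced M"
proof -
  have "hc_mat (transpose_mat M) = transpose_mat (hr_mat M)"
    by (rule eq_matI) (auto simp: hc_mat_def hr_mat_def)
  then show ?thesis
    by (simp add: column_reduced_def row_reduced_def hr_mat_def)
qed

lemma (in vec_space) full_rank_distinct_cols:
  assumes "A \<in> carrier_mat n nc" "rank A = nc"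
  shows "distinct (cols A)"
proof (rule ccontr)
  assume "\<not> distinct (cols A)"
  then have "card (set (cols A)) < nc"
    using assms(1) card_distinct card_length cols_length carrier_matD(2) nat_less_le by metis
  obtain S where S: "maximal S (\<lambda>T. T \<subseteq> set (cols A) \<and> lin_indpt T)"
    using maximal_exists[of "\<lambda>T. T \<subseteq> set (cols A) \<and> lin_indpt T" "card (set (cols A))" "{}"]
    by (meson List.finite_set card_mono empty_iff empty_subsetI finite_lin_indpt2 rev_finite_subset)
  then have "card S \<le> card (set (cols A))"
    by (simp add: card_mono maximal_def)
  then show False
    using rank_card_indpt[OF assms(1) S] assms(2) \<open>card (set (cols A)) < nc\<close> by simp
qed

lemma (in vec_space) full_rank_mult_mat_vec_eq_0:
  assumes "A \<in> carrier_mat n nc" "rank A = nc" "x \<in> carrier_vec nc" "A *\<^sub>v x = 0\<^sub>v n"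
  shows "x = 0\<^sub>v nc"
proof (rule ccontr)
  assume "x \<noteq> 0\<^sub>v nc"
  have "distinct (cols A)"
    using full_rank_distinct_cols assms(1,2) by blast
  then show False
    using lin_depI[OF assms(1,3) \<open>x \<noteq> 0\<^sub>v nc\<close> assms(4)] full_rank_lin_indpt[OF assms(1,2)] by blast
qed

lemma index_mult_mat_vec_eq_sum:
  "N \<in> carrier_mat m r \<Longrightarrow> v \<in> carrier_vec r \<Longrightarrow> k < m \<Longrightarrow>
    (N *\<^sub>v v) $ k = (\<Sum>i<r. N $$ (k, i) * v $ i)"
  by (auto simp: scalar_prod_def atLeast0LessThan)

lemma vdeg_mult_mat_vec_le:
  fixes N :: "'a::idom poly mat"
  assumes N: "N \<in> carrier_mat m r" and v: "v \<in> carrier_vec r"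
  shows "vdeg (N *\<^sub>v v) \<le> (SUP i\<in>{..<r}. vdeg (col N i) + pdeg (v $ i))"
proof -
  have entry_le: "pdeg ((N *\<^sub>v v) $ k) \<le> (SUP i\<in>{..<r}. vdeg (col N i) + pdeg (v $ i))"
    if k: "k < m" for k
  proof -
    have "pdeg (N $$ (k, i) * v $ i) \<le> vdeg (col N i) + pdeg (v $ i)" if "i < r" for i
      using vdeg_upper[of k "col N i"] N k that by (simp add: pdeg_mult add_right_mono)
    then have "(SUP i\<in>{..<r}. pdeg (N $$ (k, i) * v $ i)) \<le> (SUP i\<in>{..<r}. vdeg (col N i) + pdeg (v $ i))"
      by (intro SUP_subset_mono) auto
    then show ?thesis
      unfolding index_mult_mat_vec_eq_sum[OF N v k] by (rule order.trans[OF pdeg_sum_le_SUP])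
  qed
  show ?thesis
    unfolding vdeg_eq_SUP[of "N *\<^sub>v v"] by (intro SUP_least entry_le) (use N in simp)
qed

lemma coeff_mult_mat_vec_eq_hc_mat:
  fixes N :: "'a::idom poly mat"
  assumes N: "N \<in> carrier_mat m r" and v: "v \<in> carrier_vec r" and k: "k < m"
    and bound: "\<And>i. i < r \<Longrightarrow> vdeg (col N i) + pdeg (v $ i) \<le> ereal (real D)"
  shows "coeff ((N *\<^sub>v v) $ k) D = (hc_mat N *\<^sub>v vec r (\<lambda>i. coeff (v $ i) (D - vdegree (col N i)))) $ k"
proof -
  have "coeff (N $$ (k, i) * v $ i) D = hc_mat N $$ (k, i) * coeff (v $ i) (D - vdegree (col N i))"
    if i: "i < r" for i
  proof (cases "vdeg (col N i) = -\<infinity>")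
    case True
    then have "N $$ (k, i) = 0"
      using vdeg_upper[of k "col N i"] N k i by simp
    then show ?thesis
      using True N k i by (simp add: hc_mat_index)
  next
    case False
    define a where "a = vdegree (col N i)"
    have deg_N: "degree (N $$ (k, i)) \<le> a"
      using vdeg_upper[of k "col N i"] vdeg_eq_vdegree[OF False] N k i
      by (auto simp: a_def intro!: degree_le_if_pdeg_le)
    show ?thesis
    proof (cases "v $ i = 0")
      case False
      then have "a + degree (v $ i) \<le> D"
        using bound[OF i] vdeg_eq_vdegree[OF \<open>vdeg (col N i) \<noteq> -\<infinity>\<close>] by (simp add: pdeg_def a_def)
      then have "coeff (N $$ (k, i) * v $ i) D = coeff (N $$ (k, i)) a * coeff (v $ i) (D - a)"
        using coeff_mult_at_degree_bounds[OF deg_N, of "v $ i" "D - a"] by simp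
      then show ?thesis
        using \<open>vdeg (col N i) \<noteq> -\<infinity>\<close> N k i by (simp add: hc_mat_index a_def)
    qed simp
  qed
  then show ?thesis
    using N v k hc_mat_carrier[of N] by (simp add: scalar_prod_def atLeast0LessThan coeff_sum)
qed

lemma vdeg_mult_mat_vec_column_reduced:
  fixes N :: "'a::field poly mat"
  assumes N: "N \<in> carrier_mat m r" and cr: "column_reduced N" and v: "v \<in> carrier_vec r"
  shows "vdeg (N *\<^sub>v v) = (SUP i\<in>{..<r}. vdeg (col N i) + pdeg (v $ i))" (is "_ = ?M")
proof (rule antisym)
  show "vdeg (N *\<^sub>v v) \<le> ?M"
    by (rule vdeg_mult_mat_vec_le[OF N v])
  show "?M \<le> vdeg (N *\<^sub>v v)"
  proof (cases "?M = -\<infinity>")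
    case False
    then have "{..<r} \<noteq> {}"
      by (auto simp: bot_ereal_def)
    then obtain i0 where i0: "i0 < r" "?M = vdeg (col N i0) + pdeg (v $ i0)"
      using finite_SUP_in_image[of "{..<r}" "\<lambda>i. vdeg (col N i) + pdeg (v $ i)"] by auto
    with False have col_i0: "vdeg (col N i0) \<noteq> -\<infinity>" and v_i0: "v $ i0 \<noteq> 0"
      by auto
    define D where "D = vdegree (col N i0) + degree (v $ i0)"
    have M_eq_D: "?M = ereal (real D)"
      using i0 vdeg_eq_vdegree[OF col_i0] v_i0 by (simp add: pdeg_def D_def)
    define c where "c = vec r (\<lambda>i. coeff (v $ i) (D - vdegree (col N i)))"
    have "c $ i0 \<noteq> 0"
      using i0 v_i0 by (simp add: c_def D_def)
    then have "c \<noteq> 0\<^sub>v r"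
      using i0 by auto
    then have "hc_mat N *\<^sub>v c \<noteq> 0\<^sub>v m"
      using vec_space.full_rank_mult_mat_vec_eq_0[of "hc_mat N" m r c] hc_mat_carrier[of N] N cr
      by (auto simp: column_reduced_def c_def)
    then obtain k where k: "k < m" "(hc_mat N *\<^sub>v c) $ k \<noteq> 0"
      using hc_mat_carrier[of N] N by (metis carrier_matD(1) dim_mult_mat_vec eq_vecI index_zero_vec(1,2))
    have "vdeg (col N i) + pdeg (v $ i) \<le> ereal (real D)" if "i < r" for i
      unfolding M_eq_D[symmetric] by (rule SUP_upper) (use that in simp)
    then have "coeff ((N *\<^sub>v v) $ k) D = (hc_mat N *\<^sub>v c) $ k"
      unfolding c_def by (rule coeff_mult_mat_vec_eq_hc_mat[OF N v k(1)])
    then have "coeff ((N *\<^sub>v v) $ k) D \<noteq> 0"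
      using k(2) by simp
    then have "ereal (real D) \<le> pdeg ((N *\<^sub>v v) $ k)"
      by (rule le_pdeg_if_coeff_nonzero)
    also have "\<dots> \<le> vdeg (N *\<^sub>v v)"
      using k N by (intro vdeg_upper) simp
    finally show ?thesis
      using M_eq_D by simp
  qed simp
qed

lemma mdeg_mult_column_reduced:
  fixes L R :: "'a::field poly mat"
  assumes L: "L \<in> carrier_mat m r" and R: "R \<in> carrier_mat r n" and cr: "column_reduced L"
  shows "mdeg (L * R) = (SUP i\<in>{..<r}. vdeg (col L i) + vdeg (row R i))"
proof -
  have "mdeg (L * R) = (SUP j\<in>{..<n}. vdeg (L *\<^sub>v col R j))"
    using L R by (simp add: mdeg_eq_SUP_col del: col_mult)
  also have "\<dots> = (SUP j\<in>{..<n}. SUP i\<in>{..<r}. vdeg (col L i) + pdeg (R $$ (i, j)))"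
    using R by (simp add: vdeg_mult_mat_vec_column_reduced[OF L cr])
  also have "\<dots> = (SUP i\<in>{..<r}. vdeg (col L i) + (SUP j\<in>{..<n}. pdeg (R $$ (i, j))))"
    by (subst SUP_commute) (simp add: SUP_ereal_add_right_finite)
  also have "\<dots> = (SUP i\<in>{..<r}. vdeg (col L i) + vdeg (row R i))"
    using R by (simp add: vdeg_eq_SUP)
  finally show ?thesis .
qed

lemma mdeg_mult_row_reduced:
  fixes L R :: "'a::field poly mat"
  assumes L: "L \<in> carrier_mat m r" and R: "R \<in> carrier_mat r n" and rr: "row_reduced R"
  shows "mdeg (L * R) = (SUP i\<in>{..<r}. vdeg (col L i) + vdeg (row R i))"
proof -
  have "mdeg (L * R) = mdeg (transpose_mat R * transpose_mat L)"
    using L R by (metis mdeg_transpose transpose_mult)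
  also have "\<dots> = (SUP i\<in>{..<r}. vdeg (row R i) + vdeg (col L i))"
    using L R rr by (simp add: mdeg_mult_column_reduced[of _ n r _ m] column_reduced_transpose)
  finally show ?thesis
    by (simp add: add.commute)
qed

lemma mdeg_mult_mult_reduced:
  fixes L E R :: "'a::field poly mat"
  assumes L: "L \<in> carrier_mat m r" and E: "E \<in> carrier_mat r s" and R: "R \<in> carrier_mat s n"
    and cr: "column_reduced L" and rr: "row_reduced R"
  shows "mdeg (L * E * R) =
    (SUP (i, j)\<in>{..<r} \<times> {..<s}. vdeg (col L i) + pdeg (E $$ (i, j)) + vdeg (row R j))"
proof -
  have row_ER: "vdeg (row (E * R) i) = (SUP j\<in>{..<s}. pdeg (E $$ (i, j)) + vdeg (row R j))"
    if i: "i < r" for i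
  proof -
    have "row (E * R) i = transpose_mat R *\<^sub>v row E i"
      using E R i by (intro eq_vecI) (auto simp: comm_scalar_prod[of _ s])
    moreover have "column_reduced (transpose_mat R)"
      using rr by (simp add: column_reduced_transpose)
    ultimately show ?thesis
      using E R i by (simp add: vdeg_mult_mat_vec_column_reduced[of _ n s] add.commute)
  qed
  have "mdeg (L * E * R) = mdeg (L * (E * R))"
    using L E R by simp
  also have "\<dots> = (SUP i\<in>{..<r}. vdeg (col L i) + vdeg (row (E * R) i))"
    by (rule mdeg_mult_column_reduced[OF L mult_carrier_mat[OF E R] cr])
  also have "\<dots> = (SUP i\<in>{..<r}. SUP j\<in>{..<s}. vdeg (col L i) + pdeg (E $$ (i, j)) + vdeg (row R j))"
    by (simp add: row_ER SUP_ereal_add_right_finite add.assoc)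
  also have "\<dots> = (SUP (i, j)\<in>{..<r} \<times> {..<s}. vdeg (col L i) + pdeg (E $$ (i, j)) + vdeg (row R j))"
    by (rule SUP_cartesian_product[symmetric])
  finally show ?thesis .
qed

theorem corollary3p17:
  fixes L R L2 E R2 :: "'a::field poly mat" and m r n m2 r2 s n2 :: nat
  shows
  "(L \<in> carrier_mat m r \<and> R \<in> carrier_mat r n \<and> (column_reduced L \<or> row_reduced R) \<longrightarrow>
     mdeg (L * R) = Max (insert (-\<infinity>) {vdeg (col L i) + vdeg (row R i) | i. i < r}))
   \<and>
   (L2 \<in> carrier_mat m2 r2 \<and> E \<in> carrier_mat r2 s \<and> R2 \<in> carrier_mat s n2 \<and>
     column_reduced L2 \<and> row_reduced R2 \<longrightarrow>
     mdeg (L2 * E * R2) = Max (insert (-\<infinity>)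
        {vdeg (col L2 i) + pdeg (E $$ (i, j)) + vdeg (row R2 j) | i j. i < r2 \<and> j < s}))"
proof -
  have "{vdeg (col L i) + vdeg (row R i) | i. i < r} = (\<lambda>i. vdeg (col L i) + vdeg (row R i)) ` {..<r}"
    by auto
  moreover have "{vdeg (col L2 i) + pdeg (E $$ (i, j)) + vdeg (row R2 j) | i j. i < r2 \<and> j < s}
      = (\<lambda>(i, j). vdeg (col L2 i) + pdeg (E $$ (i, j)) + vdeg (row R2 j)) ` ({..<r2} \<times> {..<s})"
    by auto
  ultimately show ?thesis
    using mdeg_mult_column_reduced[of L m r R n] mdeg_mult_row_reduced[of L m r R n]
      mdeg_mult_mult_reduced[of L2 m2 r2 E s R2 n2]
    by (auto simp: Max_insert_MInf_eq_Sup)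
qed

end
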